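(* Let $G$ be a graph on $p$ vertices, $q\ge 2^{p-1}p^2$ an integer and $c=4q+2$. Suppose $\Psi$ is a proper $c$-colouring of $K_c^{G[K_q]}$ with colours $[c]$ such that $\Psi(\phi)\in\mathrm{Im}(\phi)$ for every simple map $\phi$. For $v\in V(G)$ and $b\in[c]$ let $I(v,b)=\{\phi \text{ simple}: \Psi(\phi)=b=\phi(v)\}$, and call $I(v,b)$ large if $|I(v,b)|\ge 2pc^{p-2}$. Then there is a vertex $v\in V(G)$ such that $|\{b\in[c]: I(v,b)\text{ is large}\}|>c/2$.
   Context: $[c]=\{1,\dots,c\}$. $G[K_q]$ has vertex set $V(G)\times[q]$, with $(x,i)\sim(y,j)$ iff $xy\in E(G)$, or $x=y$ and $i\ne j$. $K_c^{F}$ has as vertices all maps $V(F)\to[c]$, with $f\sim g$ iff $f(x)\ne g(y)$ and $f(y)\ne g(x)$ for every edge $xy$ of $F$. $\mathrm{Im}(f)$ is the image of $f$. A map $\phi\in V(K_c^{G[K_q]})$ is simple if $\phi(x,i)=\phi(x,j)$ for all $x\in V(G)$, $i,j\in[q]$; for simple $\phi$ write $\phi(x)$ for this common value. There are exactly $c^p$ simple maps. *)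

theory Defs
  imports "HOL-Library.FuncSet" Complex_Main
begin

definition simple_graph :: "'a set \<Rightarrow> ('a \<Rightarrow> 'a \<Rightarrow> bool) \<Rightarrow> bool" where
  "simple_graph V E \<longleftrightarrow> finite V \<and> (\<forall>x y. E x y \<longrightarrow> x \<in> V \<and> y \<in> V \<and> x \<noteq> y \<and> E y x)"

definition lex_verts :: "'a set \<Rightarrow> nat \<Rightarrow> ('a \<times> nat) set" where
  "lex_verts V q = V \<times> {1..q}"

definition lex_adj :: "'a set \<Rightarrow> ('a \<Rightarrow> 'a \<Rightarrow> bool) \<Rightarrow> nat \<Rightarrow> ('a \<times> nat) \<Rightarrow> ('a \<times> nat) \<Rightarrow> bool" where
  "lex_adj V E q u w \<longleftrightarrow> u \<in> lex_verts V q \<and> w \<in> lex_verts V q \<and>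
     (E (fst u) (fst w) \<or> (fst u = fst w \<and> snd u \<noteq> snd w))"

definition exp_verts :: "'b set \<Rightarrow> nat \<Rightarrow> ('b \<Rightarrow> nat) set" where
  "exp_verts W c = W \<rightarrow>\<^sub>E {1..c}"

definition exp_adj :: "('b \<Rightarrow> 'b \<Rightarrow> bool) \<Rightarrow> ('b \<Rightarrow> nat) \<Rightarrow> ('b \<Rightarrow> nat) \<Rightarrow> bool" where
  "exp_adj F f g \<longleftrightarrow> (\<forall>x y. F x y \<longrightarrow> f x \<noteq> g y \<and> f y \<noteq> g x)"

definition proper_colouring :: "'v set \<Rightarrow> ('v \<Rightarrow> 'v \<Rightarrow> bool) \<Rightarrow> nat \<Rightarrow> ('v \<Rightarrow> nat) \<Rightarrow> bool" where
  "proper_colouring X R c \<Psi> \<longleftrightarrow> (\<forall>f\<in>X. \<Psi> f \<in> {1..c}) \<and> (\<forall>f\<in>X. \<forall>g\<in>X. R f g \<longrightarrow> \<Psi> f \<noteq> \<Psi> g)"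

definition simple_map :: "'a set \<Rightarrow> nat \<Rightarrow> ('a \<times> nat \<Rightarrow> nat) \<Rightarrow> bool" where
  "simple_map V q \<phi> \<longleftrightarrow> (\<forall>x\<in>V. \<forall>i\<in>{1..q}. \<forall>j\<in>{1..q}. \<phi> (x, i) = \<phi> (x, j))"

definition simple_maps :: "'a set \<Rightarrow> nat \<Rightarrow> nat \<Rightarrow> ('a \<times> nat \<Rightarrow> nat) set" where
  "simple_maps V q c = {\<phi> \<in> exp_verts (lex_verts V q) c. simple_map V q \<phi>}"

text \<open>I(v,b) = { \<phi> simple : \<Psi>(\<phi>) = b = \<phi>(v) }, where \<phi>(v) = \<phi>(v,1).\<close>
definition I_set :: "'a set \<Rightarrow> nat \<Rightarrow> nat \<Rightarrow> (('a \<times> nat \<Rightarrow> nat) \<Rightarrow> nat) \<Rightarrow> 'a \<Rightarrow> nat \<Rightarrow> ('a \<times> nat \<Rightarrow> nat) set" where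
  "I_set V q c \<Psi> v b = {\<phi> \<in> simple_maps V q c. \<Psi> \<phi> = b \<and> \<phi> (v, 1) = b}"

end

theory Submission
  imports Defs
begin

text \<open>Suppose every vertex v has at most c/2 large colours, so at least m = 2q+1 = c/2
colours b with I(v,b) small. The simple maps \<phi> with \<phi>(v) small at every v number at least
m^p. Each of them lies in I(x, \<phi>(x)) for a vertex x with \<Psi>(\<phi>) = \<phi>(x), and that set is small,
so there are at most p \<cdot> c \<cdot> 2pc^(p-2) = 2p^2 2^(p-1) m^(p-1) of them. Hence
m \<le> 2^p p^2 \<le> 2q, a contradiction.\<close>

definition simple_maps_within ::
    "'a set \<Rightarrow> nat \<Rightarrow> nat \<Rightarrow> ('a \<Rightarrow> nat set) \<Rightarrow> ('a \<times> nat \<Rightarrow> nat) set" where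
  "simple_maps_within V q c T = {\<phi> \<in> simple_maps V q c. \<forall>x\<in>V. \<phi> (x, 1) \<in> T x}"

lemma finite_simple_maps: "finite V \<Longrightarrow> finite (simple_maps V q c)"
  by (rule finite_subset[of _ "exp_verts (lex_verts V q) c"])
     (auto simp: simple_maps_def exp_verts_def lex_verts_def intro!: finite_PiE)

lemma nonempty_if_simple_maps_colour_in_image:
  assumes "\<forall>\<phi>\<in>simple_maps V q c. \<Psi> \<phi> \<in> \<phi> ` lex_verts V q"
  shows "V \<noteq> {}"
proof
  assume "V = {}"
  then have "(\<lambda>_. undefined) \<in> simple_maps V q c"
    by (simp add: simple_maps_def exp_verts_def lex_verts_def simple_map_def)
  with assms \<open>V = {}\<close> show False by (auto simp: lex_verts_def)
qed

lemma prod_card_le_card_simple_maps_within: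
  assumes "finite V" "q \<ge> 1" "\<forall>x\<in>V. T x \<subseteq> {1..c}"
  shows "(\<Prod>x\<in>V. card (T x)) \<le> card (simple_maps_within V q c T)"
proof -
  define blow_up :: "('a \<Rightarrow> nat) \<Rightarrow> 'a \<times> nat \<Rightarrow> nat" where
    "blow_up g = (\<lambda>(x, i). if (x, i) \<in> lex_verts V q then g x else undefined)" for g
  have "blow_up ` (\<Pi>\<^sub>E x\<in>V. T x) \<subseteq> simple_maps_within V q c T"
    using assms(2,3)
    by (fastforce simp: blow_up_def simple_maps_within_def simple_maps_def exp_verts_def
        lex_verts_def simple_map_def PiE_def Pi_def extensional_def)
  moreover have "inj_on blow_up (\<Pi>\<^sub>E x\<in>V. T x)"
  proof
    fix g h assume "g \<in> (\<Pi>\<^sub>E x\<in>V. T x)" "h \<in> (\<Pi>\<^sub>E x\<in>V. T x)" "blow_up g = blow_up h"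
    then have "g x = h x" for x
    proof (cases "x \<in> V")
      case True
      have "blow_up g (x, 1) = blow_up h (x, 1)" using \<open>blow_up g = blow_up h\<close> by simp
      then show ?thesis using True assms(2) by (simp add: blow_up_def lex_verts_def)
    qed (use \<open>g \<in> _\<close> \<open>h \<in> _\<close> in \<open>auto simp: PiE_def extensional_def\<close>)
    then show "g = h" ..
  qed
  moreover have "finite (simple_maps_within V q c T)"
    using finite_simple_maps[OF assms(1)] by (simp add: simple_maps_within_def)
  ultimately have "card (\<Pi>\<^sub>E x\<in>V. T x) \<le> card (simple_maps_within V q c T)"
    by (metis card_inj_on_le)
  then show ?thesis
    by (simp add: card_PiE[OF assms(1)])
qed

lemma simple_map_mem_I_set:
  assumes "q \<ge> 1" "\<phi> \<in> simple_maps V q c" "\<Psi> \<phi> \<in> \<phi> ` lex_verts V q"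
  obtains x where "x \<in> V" "\<phi> \<in> I_set V q c \<Psi> x (\<phi> (x, 1))"
proof -
  obtain x i where x: "x \<in> V" and i: "i \<in> {1..q}" and \<Psi>: "\<Psi> \<phi> = \<phi> (x, i)"
    using assms(3) unfolding lex_verts_def by blast
  have "simple_map V q \<phi>" "1 \<in> {1..q}"
    using assms(1,2) by (simp_all add: simple_maps_def)
  then have "\<phi> (x, i) = \<phi> (x, 1)"
    using x i unfolding simple_map_def by blast
  then have "\<phi> \<in> I_set V q c \<Psi> x (\<phi> (x, 1))"
    using assms(2) \<Psi> by (simp add: I_set_def)
  with x show ?thesis by (rule that)
qed

lemma card_simple_maps_within_le_sum_card_I_set:
  assumes "finite V" "q \<ge> 1" "\<forall>\<phi>\<in>simple_maps V q c. \<Psi> \<phi> \<in> \<phi> ` lex_verts V q"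
    and "\<forall>x\<in>V. finite (T x)"
  shows "card (simple_maps_within V q c T) \<le> (\<Sum>x\<in>V. \<Sum>b\<in>T x. card (I_set V q c \<Psi> x b))"
proof -
  have finite_I: "finite (I_set V q c \<Psi> x b)" for x b
    using finite_simple_maps[OF assms(1), of q c] by (rule rev_finite_subset) (auto simp: I_set_def)
  have "simple_maps_within V q c T \<subseteq> (\<Union>x\<in>V. \<Union>b\<in>T x. I_set V q c \<Psi> x b)"
  proof
    fix \<phi> assume "\<phi> \<in> simple_maps_within V q c T"
    then have \<phi>: "\<phi> \<in> simple_maps V q c" "\<forall>x\<in>V. \<phi> (x, 1) \<in> T x"
      by (simp_all add: simple_maps_within_def)
    moreover have "\<Psi> \<phi> \<in> \<phi> ` lex_verts V q"
      using assms(3) \<phi>(1) by blast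
    ultimately obtain x where "x \<in> V" "\<phi> \<in> I_set V q c \<Psi> x (\<phi> (x, 1))"
      using simple_map_mem_I_set[OF assms(2)] by blast
    with \<phi>(2) show "\<phi> \<in> (\<Union>x\<in>V. \<Union>b\<in>T x. I_set V q c \<Psi> x b)"
      by blast
  qed
  then have "card (simple_maps_within V q c T) \<le> card (\<Union>x\<in>V. \<Union>b\<in>T x. I_set V q c \<Psi> x b)"
    using assms(1,4) finite_I by (intro card_mono finite_UN_I) simp_all
  also have "\<dots> \<le> (\<Sum>x\<in>V. card (\<Union>b\<in>T x. I_set V q c \<Psi> x b))"
    using assms(1) by (rule card_UN_le)
  also have "\<dots> \<le> (\<Sum>x\<in>V. \<Sum>b\<in>T x. card (I_set V q c \<Psi> x b))"
    using assms(4) by (intro sum_mono card_UN_le) simp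
  finally show ?thesis .
qed

lemma power_le_bound_imp_le:
  fixes m p :: nat
  assumes "m > 0" "m ^ p \<le> 2 * p\<^sup>2 * (2 * m) ^ (p - 1)"
  shows "m \<le> 2 ^ p * p\<^sup>2"
proof (cases p)
  case (Suc k)
  have "m * m ^ k \<le> 2 * p\<^sup>2 * (2 * m) ^ k"
    using assms(2) Suc by simp
  also have "\<dots> = (2 ^ p * p\<^sup>2) * m ^ k"
    using Suc by (simp add: power_mult_distrib)
  finally show ?thesis
    using assms(1) by simp
qed (use assms in simp)

lemma mult_power_int_diff2:
  fixes x :: real
  assumes "p \<ge> 1" "x \<noteq> 0"
  shows "x * x powi (int p - 2) = x ^ (p - 1)"
proof -
  have "x * x powi (int p - 2) = x powi (int p - 2 + 1)"
    using assms(2) by (rule power_int_add_1'[symmetric, OF disjI1])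
  also have "\<dots> = x powi int (p - 1)"
    using assms(1) by (simp add: of_nat_diff)
  finally show ?thesis by simp
qed

lemma sum_sum_le_card_mult_bound:
  fixes f :: "'a \<Rightarrow> nat \<Rightarrow> real"
  assumes "\<forall>x\<in>V. T x \<subseteq> {1..c}" "\<forall>x\<in>V. \<forall>b\<in>T x. f x b \<le> t" "t \<ge> 0"
  shows "(\<Sum>x\<in>V. \<Sum>b\<in>T x. f x b) \<le> real (card V) * real c * t"
proof -
  have "(\<Sum>b\<in>T x. f x b) \<le> real c * t" if "x \<in> V" for x
  proof -
    have "card (T x) \<le> c"
      using card_mono[of "{1..c}" "T x"] assms(1) that by simp
    then have "real (card (T x)) * t \<le> real c * t"
      using assms(3) by (intro mult_right_mono) simp_all
    moreover have "(\<Sum>b\<in>T x. f x b) \<le> real (card (T x)) * t"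
      using sum_bounded_above[of "T x" "f x" t] assms(2) that by simp
    ultimately show ?thesis by linarith
  qed
  then have "(\<Sum>x\<in>V. \<Sum>b\<in>T x. f x b) \<le> (\<Sum>x\<in>V. real c * t)"
    by (rule sum_mono)
  then show ?thesis by simp
qed

lemma prod_card_le_card_mult_threshold:
  assumes "finite V" "q \<ge> 1" "\<forall>\<phi>\<in>simple_maps V q c. \<Psi> \<phi> \<in> \<phi> ` lex_verts V q"
    and "\<forall>x\<in>V. T x \<subseteq> {1..c}" "\<forall>x\<in>V. \<forall>b\<in>T x. real (card (I_set V q c \<Psi> x b)) \<le> t" "t \<ge> 0"
  shows "real (\<Prod>x\<in>V. card (T x)) \<le> real (card V) * real c * t"
proof -
  have "(\<Prod>x\<in>V. card (T x)) \<le> card (simple_maps_within V q c T)"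
    using assms(1,2,4) by (rule prod_card_le_card_simple_maps_within)
  also have "\<dots> \<le> (\<Sum>x\<in>V. \<Sum>b\<in>T x. card (I_set V q c \<Psi> x b))"
    using assms(1-3) assms(4)[rule_format, THEN finite_subset]
    by (intro card_simple_maps_within_le_sum_card_I_set) simp_all
  finally have "real (\<Prod>x\<in>V. card (T x)) \<le> real (\<Sum>x\<in>V. \<Sum>b\<in>T x. card (I_set V q c \<Psi> x b))"
    by (simp only: of_nat_le_iff)
  also have "\<dots> = (\<Sum>x\<in>V. \<Sum>b\<in>T x. real (card (I_set V q c \<Psi> x b)))"
    by simp
  also have "\<dots> \<le> real (card V) * real c * t"
    using assms(4-6) by (rule sum_sum_le_card_mult_bound)
  finally show ?thesis .
qed

theorem lemma3:
  fixes V :: "'a set" and E :: "'a \<Rightarrow> 'a \<Rightarrow> bool" and p q c :: nat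
    and \<Psi> :: "('a \<times> nat \<Rightarrow> nat) \<Rightarrow> nat"
  assumes G: "simple_graph V E"
    and p: "card V = p"
    and q: "q \<ge> 2 ^ (p - 1) * p ^ 2"
    and c: "c = 4 * q + 2"
    and col: "proper_colouring (exp_verts (lex_verts V q) c) (exp_adj (lex_adj V E q)) c \<Psi>"
    and im: "\<forall>\<phi>\<in>simple_maps V q c. \<Psi> \<phi> \<in> \<phi> ` lex_verts V q"
  shows "\<exists>v\<in>V. real (card {b\<in>{1..c}.
            real (card (I_set V q c \<Psi> v b)) \<ge> 2 * real p * real c powi (int p - 2)})
          > real c / 2"
proof (rule ccontr)
  define thr where "thr = 2 * real p * real c powi (int p - 2)"
  define large where "large v = {b\<in>{1..c}. thr \<le> real (card (I_set V q c \<Psi> v b))}" for v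
  define small where "small v = {1..c} - large v" for v
  define m where "m = 2 * q + 1"
  assume "\<not> ?thesis"
  then have few_large: "card (large v) \<le> m" if "v \<in> V" for v
    using that c by (fastforce simp: large_def thr_def m_def)
  have many_small: "m \<le> card (small v)" if "v \<in> V" for v
  proof -
    have "large v \<subseteq> {1..c}" by (auto simp: large_def)
    then have "card (small v) = c - card (large v)"
      by (simp add: small_def card_Diff_subset finite_subset)
    then show ?thesis using few_large[OF that] c m_def by simp
  qed
  have "finite V" using G by (simp add: simple_graph_def)
  then have "p \<ge> 1"
    using nonempty_if_simple_maps_colour_in_image[OF im] by (simp add: Suc_le_eq card_gt_0_iff flip: p)
  then have "q \<ge> 1" using order_trans[OF _ q] by simp
  have "m ^ p \<le> (\<Prod>v\<in>V. card (small v))"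
    using p prod_mono[of V "\<lambda>_. m" "\<lambda>v. card (small v)"] many_small by simp
  moreover have "real (\<Prod>v\<in>V. card (small v)) \<le> real (card V) * real c * thr"
    using \<open>finite V\<close> \<open>q \<ge> 1\<close> im
    by (rule prod_card_le_card_mult_threshold) (auto simp: small_def large_def thr_def)
  ultimately have "real (m ^ p) \<le> real (card V) * real c * thr"
    by (meson of_nat_le_iff order.trans)
  also have "\<dots> = real (2 * p\<^sup>2 * (2 * m) ^ (p - 1))"
    using mult_power_int_diff2[OF \<open>p \<ge> 1\<close>, of "real c"] p c m_def
    by (simp add: thr_def power2_eq_square mult_ac)
  finally have "m \<le> 2 ^ p * p\<^sup>2"
    using m_def by (intro power_le_bound_imp_le) (simp_all only: of_nat_le_iff)
  moreover have "2 ^ p * p\<^sup>2 \<le> 2 * q"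
    using q \<open>p \<ge> 1\<close> by (cases p) simp_all
  ultimately show False
    using m_def by simp
qed

end
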